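(* Let $k\ge 2$, $D=\{0,1,\dots,k\}$, let $f:D^n\to\mathbb{R}$ be a $k$-submodular function, let $P\subseteq D^n$ be the set of points minimising $f$, and let $P_{\mathrm{int}}=P\cap\{1,\dots,k\}^n$. Then $P_{\mathrm{int}}$ can be described as the set of solutions in $\{1,\dots,k\}^n$ of a conjunction of arbitrary unary constraints and constraints of the forms $(x=a\lor y=b)$ with $a,b\in\{1,\dots,k\}$ and $(x=\pi(y))$ with $\pi$ a permutation of $\{1,\dots,k\}$.
   Context: With $\sqcap,\sqcup$ on $\{0,\dots,k\}$ given by $0\sqcap x=0$, $0\sqcup x=x$, $x\sqcap x=x\sqcup x=x$ and $x\sqcap y=x\sqcup y=0$ for distinct nonzero $x,y$, a function $f$ on $D^n$ is $k$-submodular if $f(X)+f(Y)\ge f(X\sqcap Y)+f(X\sqcup Y)$ for all $X,Y\in D^n$, with operations applied coordinatewise. *)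

theory Defs
  imports Complex_Main
begin

text \<open>Domain D = {0,...,k}; points of D^n are functions nat => nat that are
  bounded by k on the coordinates 0..n-1 and equal 0 elsewhere.\<close>

definition kmeet :: "nat \<Rightarrow> nat \<Rightarrow> nat" where
  "kmeet x y = (if x = y then x else 0)"

definition kjoin :: "nat \<Rightarrow> nat \<Rightarrow> nat" where
  "kjoin x y = (if x = 0 then y else if y = 0 then x else if x = y then x else 0)"

definition dom_pts :: "nat \<Rightarrow> nat \<Rightarrow> (nat \<Rightarrow> nat) set" where
  "dom_pts k n = {x. (\<forall>i<n. x i \<le> k) \<and> (\<forall>i\<ge>n. x i = 0)}"

definition int_pts :: "nat \<Rightarrow> nat \<Rightarrow> (nat \<Rightarrow> nat) set" where
  "int_pts k n = {x. (\<forall>i<n. 1 \<le> x i \<and> x i \<le> k) \<and> (\<forall>i\<ge>n. x i = 0)}"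

definition k_submodular :: "nat \<Rightarrow> nat \<Rightarrow> ((nat \<Rightarrow> nat) \<Rightarrow> real) \<Rightarrow> bool" where
  "k_submodular k n f \<longleftrightarrow>
     (\<forall>X\<in>dom_pts k n. \<forall>Y\<in>dom_pts k n.
        f X + f Y \<ge> f (\<lambda>i. kmeet (X i) (Y i)) + f (\<lambda>i. kjoin (X i) (Y i)))"

definition minimisers :: "nat \<Rightarrow> nat \<Rightarrow> ((nat \<Rightarrow> nat) \<Rightarrow> real) \<Rightarrow> (nat \<Rightarrow> nat) set" where
  "minimisers k n f = {x \<in> dom_pts k n. \<forall>y\<in>dom_pts k n. f x \<le> f y}"

datatype constr =
    Unary nat "nat set"
  | Disj nat nat nat nat
  | PermC nat nat "nat \<Rightarrow> nat"

fun constr_wf :: "nat \<Rightarrow> nat \<Rightarrow> constr \<Rightarrow> bool" where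
  "constr_wf k n (Unary i S) \<longleftrightarrow> i < n"
| "constr_wf k n (Disj i j a b) \<longleftrightarrow> i < n \<and> j < n \<and> a \<in> {1..k} \<and> b \<in> {1..k}"
| "constr_wf k n (PermC i j \<pi>) \<longleftrightarrow> i < n \<and> j < n \<and> bij_betw \<pi> {1..k} {1..k}"

fun constr_sat :: "constr \<Rightarrow> (nat \<Rightarrow> nat) \<Rightarrow> bool" where
  "constr_sat (Unary i S) x \<longleftrightarrow> x i \<in> S"
| "constr_sat (Disj i j a b) x \<longleftrightarrow> x i = a \<or> x j = b"
| "constr_sat (PermC i j \<pi>) x \<longleftrightarrow> x i = \<pi> (x j)"

end

theory Submission
  imports Defs
begin

text \<open>Minimisers of a k-submodular function are closed under \<open>\<sqinter>\<close> and \<open>\<squnion>\<close>, and on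
  \<open>{1..k}\<^sup>n\<close> the composite \<open>(x \<sqinter> y) \<squnion> (z \<squnion> (x \<sqinter> y))\<close> is the dual discriminator, which takes
  \<open>x\<^sub>i\<close> where \<open>x\<^sub>i = y\<^sub>i\<close> and \<open>z\<^sub>i\<close> otherwise. A set of tuples closed under the dual
  discriminator contains every tuple all of whose two-coordinate restrictions it contains: among
  three tuples agreeing with x off one coordinate each, two agree with x at every coordinate.
  A binary relation closed under the dual discriminator whose projections contain a and b but
  which misses (a, b) has either a row or a column with two entries, which forces it into a
  relation \<open>c = a\<^sub>0 \<or> e = b\<^sub>0\<close> avoiding (a, b), or else it is the graph of a partial
  injection, which extends to a permutation. One such separating constraint for each of the
  finitely many interior non-minimisers describes the interior minimisers.\<close>

lemma inj_on_extends_to_permutation: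
  assumes "finite U" "inj_on g B" "B \<subseteq> U" "g ` B \<subseteq> U"
  shows "\<exists>\<pi>. bij_betw \<pi> U U \<and> (\<forall>e\<in>B. \<pi> e = g e)"
proof -
  have "card (U - B) = card (U - g ` B)"
    using assms by (simp add: card_Diff_subset card_image finite_subset)
  then obtain h where h: "bij_betw h (U - B) (U - g ` B)"
    using finite_same_card_bij assms(1) by blast
  have "bij_betw (\<lambda>e. if e \<in> B then g e else h e) (B \<union> (U - B)) (g ` B \<union> (U - g ` B))"
    using assms(2) h by (intro bij_betw_disjoint_Un) (auto simp: bij_betw_def)
  moreover have "B \<union> (U - B) = U" "g ` B \<union> (U - g ` B) = U"
    using assms by auto
  ultimately show ?thesis by (intro exI[of _ "\<lambda>e. if e \<in> B then g e else h e"]) auto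
qed

definition dual_discr :: "'a \<Rightarrow> 'a \<Rightarrow> 'a \<Rightarrow> 'a" where
  "dual_discr a b c = (if a = b then a else c)"

definition dual_discr_closed :: "('i \<Rightarrow> 'a) set \<Rightarrow> bool" where
  "dual_discr_closed R \<longleftrightarrow>
     (\<forall>x\<in>R. \<forall>y\<in>R. \<forall>z\<in>R. (\<lambda>i. dual_discr (x i) (y i) (z i)) \<in> R)"

definition rel_dual_discr_closed :: "('a \<times> 'b) set \<Rightarrow> bool" where
  "rel_dual_discr_closed Q \<longleftrightarrow>
     (\<forall>(c1, e1)\<in>Q. \<forall>(c2, e2)\<in>Q. \<forall>(c3, e3)\<in>Q.
        (dual_discr c1 c2 c3, dual_discr e1 e2 e3) \<in> Q)"

lemma rel_dual_discr_closedD: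
  "rel_dual_discr_closed Q \<Longrightarrow> (c1, e1) \<in> Q \<Longrightarrow> (c2, e2) \<in> Q \<Longrightarrow> (c3, e3) \<in> Q \<Longrightarrow>
     (dual_discr c1 c2 c3, dual_discr e1 e2 e3) \<in> Q"
  unfolding rel_dual_discr_closed_def by fast

lemma rel_dual_discr_closed_converse:
  "rel_dual_discr_closed Q \<Longrightarrow> rel_dual_discr_closed (Q\<inverse>)"
  unfolding rel_dual_discr_closed_def by fast

lemma dual_discr_closed_projection:
  "dual_discr_closed R \<Longrightarrow> rel_dual_discr_closed ((\<lambda>r. (r i, r j)) ` R)"
  unfolding dual_discr_closed_def rel_dual_discr_closed_def by fastforce

lemma dual_discr_closed_pairwise_agreement:
  assumes closed: "dual_discr_closed R"
    and "finite S" "S \<noteq> {}"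
    and "\<And>i j. i \<in> S \<Longrightarrow> j \<in> S \<Longrightarrow> \<exists>r\<in>R. r i = x i \<and> r j = x j"
  shows "\<exists>r\<in>R. \<forall>i\<in>S. r i = x i"
  using assms(2-4)
proof (induction "card S" arbitrary: S rule: less_induct)
  case less
  note pairs = less.prems(3)
  from \<open>S \<noteq> {}\<close> consider (small) i j where "i \<in> S" "j \<in> S" "S \<subseteq> {i, j}"
    | (large) s1 s2 s3 where "s1 \<in> S" "s2 \<in> S" "s3 \<in> S" "s1 \<noteq> s2" "s1 \<noteq> s3" "s2 \<noteq> s3"
    by blast
  then show ?case
  proof cases
    case small
    then show ?thesis using pairs[of i j] by (metis empty_iff insert_iff subsetD)
  next
    case large
    have "\<exists>r\<in>R. \<forall>i\<in>S - {s}. r i = x i" if "s \<in> S" "s' \<in> S" "s' \<noteq> s" for s s'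
    proof (rule less.hyps)
      show "card (S - {s}) < card S"
        using that less.prems by (intro card_Diff1_less)
      show "S - {s} \<noteq> {}"
        using that by blast
    qed (use less.prems in auto)
    note agree = this
    obtain r1 where "r1 \<in> R" and r1: "\<forall>i\<in>S - {s1}. r1 i = x i"
      using agree large by blast
    obtain r2 where "r2 \<in> R" and r2: "\<forall>i\<in>S - {s2}. r2 i = x i"
      using agree large by blast
    obtain r3 where "r3 \<in> R" and r3: "\<forall>i\<in>S - {s3}. r3 i = x i"
      using agree large by blast
    have "(\<lambda>i. dual_discr (r1 i) (r2 i) (r3 i)) \<in> R"
      using closed \<open>r1 \<in> R\<close> \<open>r2 \<in> R\<close> \<open>r3 \<in> R\<close> by (simp add: dual_discr_closed_def)
    moreover have "\<forall>i\<in>S. dual_discr (r1 i) (r2 i) (r3 i) = x i"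
      using r1 r2 r3 large by (auto simp: dual_discr_def)
    ultimately show ?thesis by (intro bexI[of _ "\<lambda>i. dual_discr (r1 i) (r2 i) (r3 i)"]) auto
  qed
qed

lemma rel_dual_discr_closed_full_row:
  assumes closed: "rel_dual_discr_closed Q"
    and "(c, e1) \<in> Q" "(c, e2) \<in> Q" "e1 \<noteq> e2" "e \<in> Range Q"
  shows "(c, e) \<in> Q"
proof -
  obtain c' where "(c', e) \<in> Q" using \<open>e \<in> Range Q\<close> by blast
  from rel_dual_discr_closedD[OF closed assms(2,3) this] show ?thesis
    using \<open>e1 \<noteq> e2\<close> by (simp add: dual_discr_def)
qed

lemma rel_dual_discr_closed_disjunction:
  assumes closed: "rel_dual_discr_closed Q"
    and "a \<in> Domain Q" "b \<in> Range Q" "(a, b) \<notin> Q"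
    and row: "(c, e1) \<in> Q" "(c, e2) \<in> Q" "e1 \<noteq> e2"
  shows "\<exists>a0\<in>Domain Q. \<exists>b0\<in>Range Q. a0 \<noteq> a \<and> b0 \<noteq> b \<and> (\<forall>(c', e)\<in>Q. c' = a0 \<or> e = b0)"
proof -
  obtain b0 where ab0: "(a, b0) \<in> Q" using \<open>a \<in> Domain Q\<close> by blast
  have row_a: "e = b0" if "(a, e) \<in> Q" for e
    using rel_dual_discr_closed_full_row[OF closed ab0 that _ \<open>b \<in> Range Q\<close>] \<open>(a, b) \<notin> Q\<close>
    by blast
  have full: "(c, e) \<in> Q" if "e \<in> Range Q" for e
    using rel_dual_discr_closed_full_row[OF closed row that] .
  have "c' = c \<or> e = b0" if "(c', e) \<in> Q" for c' e
  proof (cases "c' = c")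
    case False
    have "(c, e) \<in> Q" using full that by blast
    from rel_dual_discr_closedD[OF closed that this ab0]
    have "(dual_discr c' c a, dual_discr e e b0) \<in> Q" .
    then show ?thesis
      using False row_a by (simp add: dual_discr_def)
  qed simp
  moreover have "c \<noteq> a" "b0 \<noteq> b"
    using full[OF \<open>b \<in> Range Q\<close>] ab0 \<open>(a, b) \<notin> Q\<close> by auto
  moreover have "c \<in> Domain Q" "b0 \<in> Range Q" using row ab0 by auto
  ultimately show ?thesis by blast
qed

lemma matching_extends_to_permutation:
  assumes "finite U" "Q \<subseteq> U \<times> U"
    and matching: "\<And>c e c' e'. (c, e) \<in> Q \<Longrightarrow> (c', e') \<in> Q \<Longrightarrow> c = c' \<longleftrightarrow> e = e'"
  shows "\<exists>\<pi>. bij_betw \<pi> U U \<and> (\<forall>(c, e)\<in>Q. c = \<pi> e)"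
proof -
  define g where "g e = (THE c. (c, e) \<in> Q)" for e
  have g: "g e = c" if "(c, e) \<in> Q" for c e
    unfolding g_def using that matching by blast
  have "inj_on g (Range Q)"
    by (rule inj_onI) (use g matching in fastforce)
  moreover have "Range Q \<subseteq> U" "g ` Range Q \<subseteq> U"
    using assms(2) g by fastforce+
  ultimately obtain \<pi> where "bij_betw \<pi> U U" and \<pi>: "\<forall>e\<in>Range Q. \<pi> e = g e"
    using inj_on_extends_to_permutation[OF \<open>finite U\<close>] by blast
  moreover have "c = \<pi> e" if "(c, e) \<in> Q" for c e
    using \<pi> g[OF that] RangeI[OF that] by simp
  ultimately show ?thesis by blast
qed

lemma rel_dual_discr_closed_separation:
  assumes closed: "rel_dual_discr_closed Q" and "finite U" "Q \<subseteq> U \<times> U"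
    and ab: "a \<in> Domain Q" "b \<in> Range Q" "(a, b) \<notin> Q"
  shows "(\<exists>a0\<in>Domain Q. \<exists>b0\<in>Range Q. a0 \<noteq> a \<and> b0 \<noteq> b \<and> (\<forall>(c, e)\<in>Q. c = a0 \<or> e = b0))
       \<or> (\<exists>\<pi>. bij_betw \<pi> U U \<and> \<pi> b \<noteq> a \<and> (\<forall>(c, e)\<in>Q. c = \<pi> e))"
proof -
  consider (row) c e1 e2 where "(c, e1) \<in> Q" "(c, e2) \<in> Q" "e1 \<noteq> e2"
    | (column) c1 c2 e where "(c1, e) \<in> Q" "(c2, e) \<in> Q" "c1 \<noteq> c2"
    | (matching) "\<And>c e c' e'. (c, e) \<in> Q \<Longrightarrow> (c', e') \<in> Q \<Longrightarrow> c = c' \<longleftrightarrow> e = e'"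
    by blast
  then show ?thesis
  proof cases
    case row
    then show ?thesis using rel_dual_discr_closed_disjunction[OF closed ab] by blast
  next
    case column
    then have "(e, c1) \<in> Q\<inverse>" "(e, c2) \<in> Q\<inverse>" "b \<in> Domain (Q\<inverse>)" "a \<in> Range (Q\<inverse>)" "(b, a) \<notin> Q\<inverse>"
      using ab by auto
    from rel_dual_discr_closed_disjunction[OF rel_dual_discr_closed_converse[OF closed] this(3-5,1,2)]
    obtain b0 a0 where "b0 \<in> Range Q" "a0 \<in> Domain Q" "b0 \<noteq> b" "a0 \<noteq> a"
      and "\<forall>(e, c)\<in>Q\<inverse>. e = b0 \<or> c = a0"
      using \<open>c1 \<noteq> c2\<close> by auto
    then show ?thesis by blast
  next
    case matching
    then obtain \<pi> where "bij_betw \<pi> U U" and \<pi>: "\<forall>(c, e)\<in>Q. c = \<pi> e"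
      using matching_extends_to_permutation[OF \<open>finite U\<close> \<open>Q \<subseteq> U \<times> U\<close>] by blast
    moreover have "\<pi> b \<noteq> a"
      using \<pi> ab(2,3) by auto
    ultimately show ?thesis by blast
  qed
qed

lemma int_pts_eqI:
  assumes "x \<in> int_pts k n" "y \<in> int_pts k n" "\<And>i. i < n \<Longrightarrow> x i = y i"
  shows "x = y"
proof
  fix i
  show "x i = y i" by (cases "i < n") (use assms in \<open>auto simp: int_pts_def\<close>)
qed

lemma finite_int_pts: "finite (int_pts k n)"
proof (rule finite_subset)
  show "int_pts k n \<subseteq> {g. \<forall>i. (i \<in> {..<n} \<longrightarrow> g i \<in> {0..k}) \<and> (i \<notin> {..<n} \<longrightarrow> g i = 0)}"
    by (auto simp: int_pts_def)
  show "finite {g. \<forall>i. (i \<in> {..<n} \<longrightarrow> g i \<in> {0..k}) \<and> (i \<notin> {..<n} \<longrightarrow> g i = (0::nat))}"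
    by (rule finite_set_of_finite_funs) auto
qed

lemma pair_separating_constraint:
  assumes closed: "dual_discr_closed R" and R: "R \<subseteq> int_pts k n" and "i < n" "j < n"
    and "\<exists>r\<in>R. r i = x i" "\<exists>r\<in>R. r j = x j" "\<not> (\<exists>r\<in>R. r i = x i \<and> r j = x j)"
  shows "\<exists>c. constr_wf k n c \<and> (\<forall>r\<in>R. constr_sat c r) \<and> \<not> constr_sat c x"
proof -
  define Q where "Q = (\<lambda>r. (r i, r j)) ` R"
  have closed_Q: "rel_dual_discr_closed Q"
    unfolding Q_def by (rule dual_discr_closed_projection[OF closed])
  have Q: "Q \<subseteq> {1..k} \<times> {1..k}"
    using R \<open>i < n\<close> \<open>j < n\<close> by (auto simp: Q_def int_pts_def)
  have "x i \<in> Domain Q"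
  proof -
    obtain r where "r \<in> R" "r i = x i" using assms(5) by blast
    then have "(x i, r j) \<in> Q" unfolding Q_def by (intro rev_image_eqI) auto
    then show ?thesis by blast
  qed
  moreover have "x j \<in> Range Q"
  proof -
    obtain r where "r \<in> R" "r j = x j" using assms(6) by blast
    then have "(r i, x j) \<in> Q" unfolding Q_def by (intro rev_image_eqI) auto
    then show ?thesis by blast
  qed
  moreover have "(x i, x j) \<notin> Q"
    using assms(7) unfolding Q_def by auto
  ultimately have "(\<exists>a0\<in>Domain Q. \<exists>b0\<in>Range Q. a0 \<noteq> x i \<and> b0 \<noteq> x j \<and>
        (\<forall>(c, e)\<in>Q. c = a0 \<or> e = b0))
      \<or> (\<exists>\<pi>. bij_betw \<pi> {1..k} {1..k} \<and> \<pi> (x j) \<noteq> x i \<and> (\<forall>(c, e)\<in>Q. c = \<pi> e))"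
    using rel_dual_discr_closed_separation[OF closed_Q finite_atLeastAtMost Q] by blast
  then show ?thesis
  proof (elim disjE bexE exE conjE)
    fix a0 b0
    assume "a0 \<in> Domain Q" "b0 \<in> Range Q" "a0 \<noteq> x i" "b0 \<noteq> x j"
      and "\<forall>(c, e)\<in>Q. c = a0 \<or> e = b0"
    moreover have "a0 \<in> {1..k}" "b0 \<in> {1..k}"
      using calculation(1,2) Q by auto
    ultimately show ?thesis using \<open>i < n\<close> \<open>j < n\<close>
      by (intro exI[of _ "Disj i j a0 b0"]) (auto simp: Q_def)
  next
    fix \<pi>
    assume "bij_betw \<pi> {1..k} {1..k}" "\<pi> (x j) \<noteq> x i" "\<forall>(c, e)\<in>Q. c = \<pi> e"
    then show ?thesis using \<open>i < n\<close> \<open>j < n\<close>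
      by (intro exI[of _ "PermC i j \<pi>"]) (auto simp: Q_def)
  qed
qed

lemma separating_constraint:
  assumes closed: "dual_discr_closed R" and R: "R \<subseteq> int_pts k n"
    and x: "x \<in> int_pts k n" "x \<notin> R" and "0 < n"
  shows "\<exists>c. constr_wf k n c \<and> (\<forall>r\<in>R. constr_sat c r) \<and> \<not> constr_sat c x"
proof -
  consider (unary) i where "i < n" "\<forall>r\<in>R. r i \<noteq> x i"
    | (pairwise) "\<forall>i<n. \<forall>j<n. \<exists>r\<in>R. r i = x i \<and> r j = x j"
    | (binary) i j where "i < n" "j < n" "\<forall>i<n. \<exists>r\<in>R. r i = x i"
        "\<not> (\<exists>r\<in>R. r i = x i \<and> r j = x j)"
    by fast
  then show ?thesis
  proof cases
    case unary
    then show ?thesis by (intro exI[of _ "Unary i ((\<lambda>r. r i) ` R)"]) auto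
  next
    case pairwise
    then obtain r where "r \<in> R" "\<forall>i\<in>{..<n}. r i = x i"
      using dual_discr_closed_pairwise_agreement[OF closed, of "{..<n}" x] \<open>0 < n\<close> by auto
    then have "r = x" using R x(1) by (intro int_pts_eqI) auto
    then show ?thesis using \<open>r \<in> R\<close> x(2) by blast
  next
    case binary
    then show ?thesis
      by (intro pair_separating_constraint[OF closed R binary(1,2)]) (use binary(3,4) in auto)
  qed
qed

lemma constraint_description:
  assumes "R \<subseteq> int_pts k n"
    and separating: "\<And>x. x \<in> int_pts k n \<Longrightarrow> x \<notin> R \<Longrightarrow>
      \<exists>c. constr_wf k n c \<and> (\<forall>r\<in>R. constr_sat c r) \<and> \<not> constr_sat c x"
  shows "\<exists>cs. (\<forall>c\<in>set cs. constr_wf k n c) \<and> R = {x \<in> int_pts k n. \<forall>c\<in>set cs. constr_sat c x}"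
proof -
  have "\<forall>x\<in>int_pts k n - R. \<exists>c. constr_wf k n c \<and> (\<forall>r\<in>R. constr_sat c r) \<and> \<not> constr_sat c x"
    using separating by blast
  then obtain C where C: "\<forall>x\<in>int_pts k n - R.
      constr_wf k n (C x) \<and> (\<forall>r\<in>R. constr_sat (C x) r) \<and> \<not> constr_sat (C x) x"
    by (metis bchoice)
  have "finite (C ` (int_pts k n - R))" by (simp add: finite_int_pts)
  then obtain cs where cs: "set cs = C ` (int_pts k n - R)"
    by (metis finite_list)
  have "\<forall>c\<in>set cs. constr_wf k n c" using C cs by auto
  moreover have "R = {x \<in> int_pts k n. \<forall>c\<in>set cs. constr_sat c x}"
  proof (intro equalityI subsetI)
    fix x assume "x \<in> R"
    have "constr_sat c x" if c: "c \<in> set cs" for c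
    proof -
      obtain y where "y \<in> int_pts k n - R" "c = C y" using c cs by auto
      then show ?thesis using C \<open>x \<in> R\<close> by blast
    qed
    then show "x \<in> {x \<in> int_pts k n. \<forall>c\<in>set cs. constr_sat c x}"
      using assms(1) \<open>x \<in> R\<close> by blast
  next
    fix x assume x: "x \<in> {x \<in> int_pts k n. \<forall>c\<in>set cs. constr_sat c x}"
    show "x \<in> R"
    proof (rule ccontr)
      assume "x \<notin> R"
      then have "C x \<in> set cs" "\<not> constr_sat (C x) x" using x C cs by auto
      then show False using x by blast
    qed
  qed
  ultimately show ?thesis by blast
qed

lemma kmeet_dom_pts:
  "x \<in> dom_pts k n \<Longrightarrow> y \<in> dom_pts k n \<Longrightarrow> (\<lambda>i. kmeet (x i) (y i)) \<in> dom_pts k n"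
  by (auto simp: dom_pts_def kmeet_def)

lemma kjoin_dom_pts:
  "x \<in> dom_pts k n \<Longrightarrow> y \<in> dom_pts k n \<Longrightarrow> (\<lambda>i. kjoin (x i) (y i)) \<in> dom_pts k n"
  by (auto simp: dom_pts_def kjoin_def)

lemma k_submodular_minimisers_closed:
  assumes "k_submodular k n f" "x \<in> minimisers k n f" "y \<in> minimisers k n f"
  shows "(\<lambda>i. kmeet (x i) (y i)) \<in> minimisers k n f" "(\<lambda>i. kjoin (x i) (y i)) \<in> minimisers k n f"
proof -
  let ?m = "\<lambda>i. kmeet (x i) (y i)" and ?j = "\<lambda>i. kjoin (x i) (y i)"
  have dom: "x \<in> dom_pts k n" "y \<in> dom_pts k n" "?m \<in> dom_pts k n" "?j \<in> dom_pts k n"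
    using assms(2,3) kmeet_dom_pts kjoin_dom_pts by (auto simp: minimisers_def)
  have "f ?m + f ?j \<le> f x + f y"
    using assms(1) dom by (auto simp: k_submodular_def)
  moreover have "f x = f y" "f x \<le> f ?m" "f x \<le> f ?j"
    using assms(2,3) dom by (force simp: minimisers_def)+
  ultimately have "f ?m = f x" "f ?j = f x" by linarith+
  then show "?m \<in> minimisers k n f" "?j \<in> minimisers k n f"
    using assms(2) dom by (auto simp: minimisers_def)
qed

lemma kjoin_kmeet_dual_discr:
  "a \<noteq> 0 \<Longrightarrow> b \<noteq> 0 \<Longrightarrow> c \<noteq> 0 \<Longrightarrow>
     kjoin (kmeet a b) (kjoin c (kmeet a b)) = dual_discr a b c"
  by (auto simp: kmeet_def kjoin_def dual_discr_def)

lemma k_submodular_dual_discr_closed: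
  assumes "k_submodular k n f"
  shows "dual_discr_closed (minimisers k n f \<inter> int_pts k n)"
  unfolding dual_discr_closed_def
proof (intro ballI)
  fix x y z assume xyz: "x \<in> minimisers k n f \<inter> int_pts k n" "y \<in> minimisers k n f \<inter> int_pts k n"
    "z \<in> minimisers k n f \<inter> int_pts k n"
  let ?s = "\<lambda>i. kmeet (x i) (y i)"
  let ?t = "\<lambda>i. kjoin (z i) (?s i)"
  have "?s \<in> minimisers k n f"
    using k_submodular_minimisers_closed(1)[OF assms] xyz by blast
  then have "?t \<in> minimisers k n f"
    using k_submodular_minimisers_closed(2)[OF assms] xyz by blast
  then have "(\<lambda>i. kjoin (?s i) (?t i)) \<in> minimisers k n f"
    using k_submodular_minimisers_closed(2)[OF assms \<open>?s \<in> minimisers k n f\<close>] by blast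
  moreover have "(\<lambda>i. kjoin (?s i) (?t i)) = (\<lambda>i. dual_discr (x i) (y i) (z i))"
  proof
    fix i
    show "kjoin (?s i) (?t i) = dual_discr (x i) (y i) (z i)"
    proof (cases "i < n")
      case True
      then have "x i \<noteq> 0" "y i \<noteq> 0" "z i \<noteq> 0" using xyz by (auto simp: int_pts_def)
      then show ?thesis by (rule kjoin_kmeet_dual_discr)
    next
      case False
      then have "x i = 0" "y i = 0" "z i = 0" using xyz by (auto simp: int_pts_def)
      then show ?thesis by (simp add: kmeet_def kjoin_def dual_discr_def)
    qed
  qed
  moreover have "(\<lambda>i. dual_discr (x i) (y i) (z i)) \<in> int_pts k n"
    using xyz by (auto simp: int_pts_def dual_discr_def)
  ultimately show "(\<lambda>i. dual_discr (x i) (y i) (z i)) \<in> minimisers k n f \<inter> int_pts k n"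
    by simp
qed

lemma int_pts_zero_minimisers: "int_pts k 0 \<subseteq> minimisers k 0 f"
proof -
  have "dom_pts k 0 = {\<lambda>_. 0}" "int_pts k 0 = {\<lambda>_. 0}"
    by (auto simp: dom_pts_def int_pts_def)
  then show ?thesis by (simp add: minimisers_def)
qed

theorem lemma4:
  fixes k n :: nat and f :: "(nat \<Rightarrow> nat) \<Rightarrow> real"
  assumes "k \<ge> 2"
    and "k_submodular k n f"
  shows "\<exists>cs :: constr list. (\<forall>c\<in>set cs. constr_wf k n c) \<and>
           minimisers k n f \<inter> int_pts k n = {x \<in> int_pts k n. \<forall>c\<in>set cs. constr_sat c x}"
proof (rule constraint_description)
  fix x assume "x \<in> int_pts k n" "x \<notin> minimisers k n f \<inter> int_pts k n"
  moreover have "0 < n"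
    using calculation int_pts_zero_minimisers by (metis IntI gr0I subsetD)
  ultimately show "\<exists>c. constr_wf k n c \<and> (\<forall>r\<in>minimisers k n f \<inter> int_pts k n. constr_sat c r)
      \<and> \<not> constr_sat c x"
    by (intro separating_constraint k_submodular_dual_discr_closed assms(2)) auto
qed auto

end
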